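(* Let $\Sigma$ be a finite set of dependencies and $\mathcal{D}$ a database. (1) For every fact $\alpha$, $\langle\Sigma,\mathcal{D}\rangle$ AR-entails $\alpha$ if and only if $\langle\Sigma,\mathcal{D}\rangle$ IAR-entails $\alpha$. (2) If moreover every dependency of $\Sigma$ is linear, then for every domain-independent first-order sentence $\phi$ (in particular every safe BUCQ), $\langle\Sigma,\mathcal{D}\rangle$ AR-entails $\phi$ if and only if $\langle\Sigma,\mathcal{D}\rangle$ IAR-entails $\phi$.
   Context: A signature is a set of predicate symbols with arities, always containing a special 0-ary predicate $\bot$. A term is a constant or a variable; a (predicate) atom is $p(t_1,\dots,t_n)$; an inequality is $t\neq t'$. A database is a finite set of ground atoms (facts) not containing $\bot$. A conjunction with inequalities is a conjunction of at least one predicate atom or inequality. A CQ is $\exists\vec y\,\gamma$ with $\gamma$ a conjunction with inequalities; it is safe if every variable occurs in a predicate atom; a UCQ is a finite disjunction of CQs; a safe BUCQ is a UCQ without free variables whose CQs are safe. A dependency is a first-order sentence $\forall\vec x\,(\gamma\rightarrow Q)$ where $\gamma$ (the body) is a conjunction with inequalities whose variables are in $\vec x$, each occurring in some predicate atom of $\gamma$, and $Q$ (the head) is a UCQ whose free variables are among $\vec x$ and in which every existentially quantified variable of each disjunct occurs in a predicate atom of that disjunct. A dependency is linear if its body contains exactly one predicate atom. $\mathcal{D}$ is consistent with $\Sigma$ if $\mathcal{D}$ satisfies every dependency of $\Sigma$. A repair of $\langle\Sigma,\mathcal{D}\rangle$ is an inclusion-maximal subset of $\mathcal{D}$ consistent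 with $\Sigma$. $\langle\Sigma,\mathcal{D}\rangle$ AR-entails $\phi$ if $\mathcal{D}'\models\phi$ for every repair $\mathcal{D}'$; it IAR-entails $\phi$ if the intersection of all repairs satisfies $\phi$. *)

theory Defs
  imports Main
begin

datatype ('c, 'v) trm = Cst 'c | Var 'v

text \<open>Predicate symbols of the signature: the special 0-ary predicate Bot, or an ordinary one.\<close>
datatype 'p pred = Bot | Pr 'p

datatype ('p, 'c, 'v) lit = Atm "'p pred" "('c, 'v) trm list" | Neq "('c, 'v) trm" "('c, 'v) trm"

text \<open>A conjunction with inequalities is a (nonempty) list of literals.
  A CQ is a pair (existentially quantified variables, conjunction); a UCQ a list of CQs.
  A dependency is a pair (body, head).\<close>
type_synonym ('p, 'c, 'v) conj = "('p, 'c, 'v) lit list"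
type_synonym ('p, 'c, 'v) cq = "'v list \<times> ('p, 'c, 'v) conj"
type_synonym ('p, 'c, 'v) ucq = "('p, 'c, 'v) cq list"
type_synonym ('p, 'c, 'v) dep = "('p, 'c, 'v) conj \<times> ('p, 'c, 'v) ucq"

text \<open>Facts (ground atoms over ordinary predicates, hence never Bot) and databases.\<close>
type_synonym ('p, 'c) fact = "'p \<times> 'c list"
type_synonym ('p, 'c) db = "('p, 'c) fact set"

fun vars_trm :: "('c, 'v) trm \<Rightarrow> 'v set" where
  "vars_trm (Cst c) = {}"
| "vars_trm (Var v) = {v}"

fun vars_lit :: "('p, 'c, 'v) lit \<Rightarrow> 'v set" where
  "vars_lit (Atm p ts) = (\<Union>t\<in>set ts. vars_trm t)"
| "vars_lit (Neq s t) = vars_trm s \<union> vars_trm t"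

fun is_patom :: "('p, 'c, 'v) lit \<Rightarrow> bool" where
  "is_patom (Atm p ts) = True"
| "is_patom (Neq s t) = False"

definition vars_conj :: "('p, 'c, 'v) conj \<Rightarrow> 'v set" where
  "vars_conj ls = (\<Union>l\<in>set ls. vars_lit l)"

definition pvars_conj :: "('p, 'c, 'v) conj \<Rightarrow> 'v set" where
  "pvars_conj ls = (\<Union>l\<in>{l \<in> set ls. is_patom l}. vars_lit l)"

definition fv_cq :: "('p, 'c, 'v) cq \<Rightarrow> 'v set" where
  "fv_cq q = vars_conj (snd q) - set (fst q)"

fun wf_lit :: "('p \<Rightarrow> nat) \<Rightarrow> ('p, 'c, 'v) lit \<Rightarrow> bool" where
  "wf_lit ar (Atm Bot ts) = (ts = [])"
| "wf_lit ar (Atm (Pr p) ts) = (length ts = ar p)"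
| "wf_lit ar (Neq s t) = True"

definition wf_conj :: "('p \<Rightarrow> nat) \<Rightarrow> ('p, 'c, 'v) conj \<Rightarrow> bool" where
  "wf_conj ar ls = (ls \<noteq> [] \<and> (\<forall>l\<in>set ls. wf_lit ar l))"

text \<open>CQ whose existential variables each occur in a predicate atom (as required in dependency heads).\<close>
definition wf_cq :: "('p \<Rightarrow> nat) \<Rightarrow> ('p, 'c, 'v) cq \<Rightarrow> bool" where
  "wf_cq ar q = (wf_conj ar (snd q) \<and> set (fst q) \<subseteq> pvars_conj (snd q))"

text \<open>Dependency: the universally quantified variables are those of the body, each of which
  occurs in a predicate atom of the body; the head is a UCQ whose free variables are among them.\<close>
definition wf_dep :: "('p \<Rightarrow> nat) \<Rightarrow> ('p, 'c, 'v) dep \<Rightarrow> bool" where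
  "wf_dep ar d = (wf_conj ar (fst d) \<and> vars_conj (fst d) \<subseteq> pvars_conj (fst d) \<and>
      snd d \<noteq> [] \<and> (\<forall>q\<in>set (snd d). wf_cq ar q \<and> fv_cq q \<subseteq> vars_conj (fst d)))"

definition linear :: "('p, 'c, 'v) dep \<Rightarrow> bool" where
  "linear d = (card {l \<in> set (fst d). is_patom l} = 1)"

definition is_database :: "('p \<Rightarrow> nat) \<Rightarrow> ('p, 'c) db \<Rightarrow> bool" where
  "is_database ar D = (finite D \<and> (\<forall>(p, cs)\<in>D. length cs = ar p))"

definition safe_bucq :: "('p \<Rightarrow> nat) \<Rightarrow> ('p, 'c, 'v) ucq \<Rightarrow> bool" where
  "safe_bucq ar Q = (Q \<noteq> [] \<and> (\<forall>q\<in>set Q. wf_conj ar (snd q) \<and> fv_cq q = {} \<and>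
      vars_conj (snd q) \<subseteq> pvars_conj (snd q)))"

section \<open>Semantics of dependencies (database as interpretation, constants as standard names)\<close>

fun ev :: "('v \<Rightarrow> 'c) \<Rightarrow> ('c, 'v) trm \<Rightarrow> 'c" where
  "ev \<sigma> (Cst c) = c"
| "ev \<sigma> (Var v) = \<sigma> v"

fun sat_lit :: "('p, 'c) db \<Rightarrow> ('v \<Rightarrow> 'c) \<Rightarrow> ('p, 'c, 'v) lit \<Rightarrow> bool" where
  "sat_lit D \<sigma> (Atm Bot ts) = False"
| "sat_lit D \<sigma> (Atm (Pr p) ts) = ((p, map (ev \<sigma>) ts) \<in> D)"
| "sat_lit D \<sigma> (Neq s t) = (ev \<sigma> s \<noteq> ev \<sigma> t)"

definition sat_conj :: "('p, 'c) db \<Rightarrow> ('v \<Rightarrow> 'c) \<Rightarrow> ('p, 'c, 'v) conj \<Rightarrow> bool" where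
  "sat_conj D \<sigma> ls = (\<forall>l\<in>set ls. sat_lit D \<sigma> l)"

definition sat_cq :: "('p, 'c) db \<Rightarrow> ('v \<Rightarrow> 'c) \<Rightarrow> ('p, 'c, 'v) cq \<Rightarrow> bool" where
  "sat_cq D \<sigma> q = (\<exists>\<tau>. (\<forall>v. v \<notin> set (fst q) \<longrightarrow> \<tau> v = \<sigma> v) \<and> sat_conj D \<tau> (snd q))"

definition sat_ucq :: "('p, 'c) db \<Rightarrow> ('v \<Rightarrow> 'c) \<Rightarrow> ('p, 'c, 'v) ucq \<Rightarrow> bool" where
  "sat_ucq D \<sigma> Q = (\<exists>q\<in>set Q. sat_cq D \<sigma> q)"

text \<open>D satisfies the Boolean UCQ Q (no free variables, so the assignment is irrelevant).\<close>
definition holds_bucq :: "('p, 'c) db \<Rightarrow> ('p, 'c, 'v) ucq \<Rightarrow> bool" where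
  "holds_bucq D Q = sat_ucq D (\<lambda>_. undefined) Q"

definition sat_dep :: "('p, 'c) db \<Rightarrow> ('p, 'c, 'v) dep \<Rightarrow> bool" where
  "sat_dep D d = (\<forall>\<sigma>. sat_conj D \<sigma> (fst d) \<longrightarrow> sat_ucq D \<sigma> (snd d))"

definition consistent :: "('p, 'c, 'v) dep set \<Rightarrow> ('p, 'c) db \<Rightarrow> bool" where
  "consistent \<Sigma> D = (\<forall>d\<in>\<Sigma>. sat_dep D d)"

definition repair :: "('p, 'c, 'v) dep set \<Rightarrow> ('p, 'c) db \<Rightarrow> ('p, 'c) db \<Rightarrow> bool" where
  "repair \<Sigma> D R = (R \<subseteq> D \<and> consistent \<Sigma> R \<and>
      (\<forall>R'. R \<subset> R' \<and> R' \<subseteq> D \<longrightarrow> \<not> consistent \<Sigma> R'))"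

text \<open>AR / IAR entailment, parameterised by the satisfaction relation "R satisfies phi" (given as P R).\<close>
definition ar_entails :: "('p, 'c, 'v) dep set \<Rightarrow> ('p, 'c) db \<Rightarrow> (('p, 'c) db \<Rightarrow> bool) \<Rightarrow> bool" where
  "ar_entails \<Sigma> D P = (\<forall>R. repair \<Sigma> D R \<longrightarrow> P R)"

definition iar_entails :: "('p, 'c, 'v) dep set \<Rightarrow> ('p, 'c) db \<Rightarrow> (('p, 'c) db \<Rightarrow> bool) \<Rightarrow> bool" where
  "iar_entails \<Sigma> D P = P (\<Inter>{R. repair \<Sigma> D R})"

datatype ('p, 'c, 'v) fo =
    FAtom "'p pred" "('c, 'v) trm list"
  | FEq "('c, 'v) trm" "('c, 'v) trm"
  | FNeg "('p, 'c, 'v) fo"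
  | FConj "('p, 'c, 'v) fo" "('p, 'c, 'v) fo"
  | FDisj "('p, 'c, 'v) fo" "('p, 'c, 'v) fo"
  | FEx 'v "('p, 'c, 'v) fo"
  | FAll 'v "('p, 'c, 'v) fo"

fun fv_fo :: "('p, 'c, 'v) fo \<Rightarrow> 'v set" where
  "fv_fo (FAtom p ts) = (\<Union>t\<in>set ts. vars_trm t)"
| "fv_fo (FEq s t) = vars_trm s \<union> vars_trm t"
| "fv_fo (FNeg f) = fv_fo f"
| "fv_fo (FConj f g) = fv_fo f \<union> fv_fo g"
| "fv_fo (FDisj f g) = fv_fo f \<union> fv_fo g"
| "fv_fo (FEx v f) = fv_fo f - {v}"
| "fv_fo (FAll v f) = fv_fo f - {v}"

fun consts_trm :: "('c, 'v) trm \<Rightarrow> 'c set" where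
  "consts_trm (Cst c) = {c}"
| "consts_trm (Var v) = {}"

fun consts_fo :: "('p, 'c, 'v) fo \<Rightarrow> 'c set" where
  "consts_fo (FAtom p ts) = (\<Union>t\<in>set ts. consts_trm t)"
| "consts_fo (FEq s t) = consts_trm s \<union> consts_trm t"
| "consts_fo (FNeg f) = consts_fo f"
| "consts_fo (FConj f g) = consts_fo f \<union> consts_fo g"
| "consts_fo (FDisj f g) = consts_fo f \<union> consts_fo g"
| "consts_fo (FEx v f) = consts_fo f"
| "consts_fo (FAll v f) = consts_fo f"

fun wf_fo :: "('p \<Rightarrow> nat) \<Rightarrow> ('p, 'c, 'v) fo \<Rightarrow> bool" where
  "wf_fo ar (FAtom Bot ts) = (ts = [])"
| "wf_fo ar (FAtom (Pr p) ts) = (length ts = ar p)"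
| "wf_fo ar (FEq s t) = True"
| "wf_fo ar (FNeg f) = wf_fo ar f"
| "wf_fo ar (FConj f g) = (wf_fo ar f \<and> wf_fo ar g)"
| "wf_fo ar (FDisj f g) = (wf_fo ar f \<and> wf_fo ar g)"
| "wf_fo ar (FEx v f) = wf_fo ar f"
| "wf_fo ar (FAll v f) = wf_fo ar f"

definition sentence :: "('p, 'c, 'v) fo \<Rightarrow> bool" where
  "sentence f = (fv_fo f = {})"

text \<open>Evaluation of a formula in the interpretation given by database D with domain Delta
  (constants interpreted as themselves, i.e. standard names).\<close>
fun eval :: "'c set \<Rightarrow> ('p, 'c) db \<Rightarrow> ('v \<Rightarrow> 'c) \<Rightarrow> ('p, 'c, 'v) fo \<Rightarrow> bool" where
  "eval \<Delta> D \<sigma> (FAtom Bot ts) = False"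
| "eval \<Delta> D \<sigma> (FAtom (Pr p) ts) = ((p, map (ev \<sigma>) ts) \<in> D)"
| "eval \<Delta> D \<sigma> (FEq s t) = (ev \<sigma> s = ev \<sigma> t)"
| "eval \<Delta> D \<sigma> (FNeg f) = (\<not> eval \<Delta> D \<sigma> f)"
| "eval \<Delta> D \<sigma> (FConj f g) = (eval \<Delta> D \<sigma> f \<and> eval \<Delta> D \<sigma> g)"
| "eval \<Delta> D \<sigma> (FDisj f g) = (eval \<Delta> D \<sigma> f \<or> eval \<Delta> D \<sigma> g)"
| "eval \<Delta> D \<sigma> (FEx v f) = (\<exists>a\<in>\<Delta>. eval \<Delta> D (\<sigma>(v := a)) f)"
| "eval \<Delta> D \<sigma> (FAll v f) = (\<forall>a\<in>\<Delta>. eval \<Delta> D (\<sigma>(v := a)) f)"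

text \<open>Truth of a sentence in a database over domain Delta (the assignment is irrelevant for sentences).\<close>
definition eval_sent :: "'c set \<Rightarrow> ('p, 'c) db \<Rightarrow> ('p, 'c, 'v) fo \<Rightarrow> bool" where
  "eval_sent \<Delta> D f = eval \<Delta> D (\<lambda>_. undefined) f"

definition adom :: "('p, 'c) db \<Rightarrow> 'c set" where
  "adom D = (\<Union>(p, cs)\<in>D. set cs)"

definition holds :: "('p, 'c) db \<Rightarrow> ('p, 'c, 'v) fo \<Rightarrow> bool" where
  "holds D f = eval_sent UNIV D f"

definition domain_independent :: "('p, 'c, 'v) fo \<Rightarrow> bool" where
  "domain_independent f = (\<forall>(D :: ('p, 'c) db) \<Delta> \<Delta>'. finite D \<longrightarrow>
      adom D \<union> consts_fo f \<subseteq> \<Delta> \<longrightarrow> adom D \<union> consts_fo f \<subseteq> \<Delta>' \<longrightarrow>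
      eval_sent \<Delta> D f = eval_sent \<Delta>' D f)"

definition fact_fo :: "'p \<Rightarrow> 'c list \<Rightarrow> ('p, 'c, 'v) fo" where
  "fact_fo p cs = FAtom (Pr p) (map Cst cs)"

end

theory Submission
  imports Defs
begin

text \<open>Entailment of a single fact is a statement about membership in every repair, which is
  membership in their intersection. For linear dependencies, whose bodies contain a single
  predicate atom, consistency is preserved under arbitrary unions: a body match in the union
  is already a body match in one of the consistent sets, and heads are positive, hence
  monotone. So the union of all consistent subsets of the database is its unique repair, and
  AR and IAR entailment agree for every query, domain-independent or not.\<close>

lemma sat_lit_mono: "D \<subseteq> D' \<Longrightarrow> sat_lit D \<sigma> l \<Longrightarrow> sat_lit D' \<sigma> l"
  by (induction D \<sigma> l rule: sat_lit.induct) auto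

lemma sat_ucq_mono: "D \<subseteq> D' \<Longrightarrow> sat_ucq D \<sigma> Q \<Longrightarrow> sat_ucq D' \<sigma> Q"
  unfolding sat_ucq_def sat_cq_def sat_conj_def using sat_lit_mono by metis

lemma sat_lit_Union_patom:
  "sat_lit (\<Union>S) \<sigma> l \<Longrightarrow> is_patom l \<Longrightarrow> \<exists>R\<in>S. sat_lit R \<sigma> l"
  by (cases "(\<Union>S, \<sigma>, l)" rule: sat_lit.cases) auto

lemma sat_conj_transfer_patoms:
  assumes "sat_conj D \<sigma> ls" and "\<forall>l\<in>set ls. is_patom l \<longrightarrow> sat_lit D' \<sigma> l"
  shows "sat_conj D' \<sigma> ls"
  unfolding sat_conj_def
proof
  fix l assume l: "l \<in> set ls"
  show "sat_lit D' \<sigma> l"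
  proof (cases l)
    case (Neq s t)
    then show ?thesis using assms(1) l unfolding sat_conj_def by auto
  qed (use assms(2) l in auto)
qed

lemma linear_body_patom:
  assumes "linear d"
  obtains l0 where "l0 \<in> set (fst d)" "is_patom l0"
    and "\<And>l. l \<in> set (fst d) \<Longrightarrow> is_patom l \<Longrightarrow> l = l0"
proof -
  obtain l0 where "{l \<in> set (fst d). is_patom l} = {l0}"
    using assms unfolding linear_def by (rule card_1_singletonE)
  then show thesis
    using that by blast
qed

lemma sat_dep_Union:
  assumes "linear d" and "\<forall>R\<in>S. sat_dep R d"
  shows "sat_dep (\<Union>S) d"
  unfolding sat_dep_def
proof (intro allI impI)
  fix \<sigma> assume body: "sat_conj (\<Union>S) \<sigma> (fst d)"
  obtain l0 where l0: "l0 \<in> set (fst d)" "is_patom l0"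
    and unique: "\<And>l. l \<in> set (fst d) \<Longrightarrow> is_patom l \<Longrightarrow> l = l0"
    using linear_body_patom[OF assms(1)] by blast
  obtain R where R: "R \<in> S" "sat_lit R \<sigma> l0"
    using sat_lit_Union_patom[of S \<sigma> l0] body l0 unfolding sat_conj_def by blast
  have "sat_conj R \<sigma> (fst d)"
    using sat_conj_transfer_patoms[OF body] unique R(2) by blast
  then have "sat_ucq R \<sigma> (snd d)"
    using assms(2) R(1) unfolding sat_dep_def by blast
  then show "sat_ucq (\<Union>S) \<sigma> (snd d)"
    using sat_ucq_mono[of R "\<Union>S"] R(1) by blast
qed

lemma consistent_Union:
  assumes "\<forall>d\<in>\<Sigma>. linear d" and "\<forall>R\<in>S. consistent \<Sigma> R"
  shows "consistent \<Sigma> (\<Union>S)"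
  using assms sat_dep_Union unfolding consistent_def by blast

lemma repair_iff_Union_consistent_subsets:
  assumes "\<forall>d\<in>\<Sigma>. linear d"
  shows "repair \<Sigma> D R \<longleftrightarrow> R = \<Union>{R'. R' \<subseteq> D \<and> consistent \<Sigma> R'}"
    (is "_ \<longleftrightarrow> R = ?U")
proof
  have sub: "?U \<subseteq> D"
    by blast
  have upper: "R' \<subseteq> ?U" if "R' \<subseteq> D" "consistent \<Sigma> R'" for R'
    using that by blast
  have cons: "consistent \<Sigma> ?U"
    by (rule consistent_Union[OF assms]) simp
  show "repair \<Sigma> D R" if "R = ?U"
    unfolding repair_def that using sub cons upper by (meson psubsetE)
  assume "repair \<Sigma> D R"
  then have "R \<subseteq> D" "consistent \<Sigma> R"
    and maximal: "\<forall>R'. R \<subset> R' \<and> R' \<subseteq> D \<longrightarrow> \<not> consistent \<Sigma> R'"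
    unfolding repair_def by simp_all
  then have "R \<subseteq> ?U"
    using upper by simp
  moreover have "\<not> R \<subset> ?U"
    using maximal sub cons by blast
  ultimately show "R = ?U"
    by (simp add: psubset_eq)
qed

lemma ar_entails_iff_iar_entails_if_unique_repair:
  assumes "\<And>R. repair \<Sigma> D R \<longleftrightarrow> R = U"
  shows "ar_entails \<Sigma> D P \<longleftrightarrow> iar_entails \<Sigma> D P"
proof -
  have "repair \<Sigma> D = (\<lambda>R. R = U)"
    using assms by blast
  then show ?thesis
    unfolding ar_entails_def iar_entails_def by simp
qed

lemma linear_ar_entails_iff_iar_entails:
  assumes "\<forall>d\<in>\<Sigma>. linear d"
  shows "ar_entails \<Sigma> D P \<longleftrightarrow> iar_entails \<Sigma> D P"
  by (rule ar_entails_iff_iar_entails_if_unique_repair)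
    (rule repair_iff_Union_consistent_subsets[OF assms])

lemma ar_entails_mem_iff_iar_entails_mem:
  "ar_entails \<Sigma> D (\<lambda>R. x \<in> R) \<longleftrightarrow> iar_entails \<Sigma> D (\<lambda>R. x \<in> R)"
  unfolding ar_entails_def iar_entails_def by blast

lemma holds_fact_fo: "holds R (fact_fo p cs :: ('p, 'c, 'v) fo) \<longleftrightarrow> (p, cs) \<in> R"
proof -
  have "map (ev \<sigma>) (map Cst cs :: ('c, 'v) trm list) = cs" for \<sigma>
    by (induction cs) auto
  then show ?thesis
    unfolding holds_def eval_sent_def fact_fo_def by simp
qed

theorem proposition1:
  fixes ar :: "'p \<Rightarrow> nat"
    and \<Sigma> :: "('p, 'c, 'v) dep set"
    and D :: "('p, 'c) db"
  assumes "finite \<Sigma>"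
    and "\<forall>d\<in>\<Sigma>. wf_dep ar d"
    and "is_database ar D"
  shows "(\<forall>p cs. length cs = ar p \<longrightarrow>
            (ar_entails \<Sigma> D (\<lambda>R. holds R (fact_fo p cs :: ('p, 'c, 'w) fo)) \<longleftrightarrow>
             iar_entails \<Sigma> D (\<lambda>R. holds R (fact_fo p cs :: ('p, 'c, 'w) fo))))
       \<and> ((\<forall>d\<in>\<Sigma>. linear d) \<longrightarrow>
            (\<forall>\<phi> :: ('p, 'c, 'w) fo. wf_fo ar \<phi> \<and> sentence \<phi> \<and> domain_independent \<phi> \<longrightarrow>
               (ar_entails \<Sigma> D (\<lambda>R. holds R \<phi>) \<longleftrightarrow> iar_entails \<Sigma> D (\<lambda>R. holds R \<phi>)))
          \<and> (\<forall>Q :: ('p, 'c, 'w) ucq. safe_bucq ar Q \<longrightarrow>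
               (ar_entails \<Sigma> D (\<lambda>R. holds_bucq R Q) \<longleftrightarrow> iar_entails \<Sigma> D (\<lambda>R. holds_bucq R Q))))"
  by (intro conjI allI impI)
    (simp_all only: holds_fact_fo ar_entails_mem_iff_iar_entails_mem
      linear_ar_entails_iff_iar_entails)

end
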